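(* The operator $\nabla_\mu$ on $\mathcal A(X;\mathbb R^m)$ is compatible with $\mu$-a.e. equality in the following sense: if $u\in\mathcal A(X;\mathbb R^m)$ and $v\in\mathcal A(X;\mathbb R^m)$ satisfies $v(x)=u(x)$ for all $x\in\mathrm{supp}(\mu)$, then $\nabla_\mu u(x)=\nabla_\mu v(x)$ for $\mu$-a.a. $x\in X$.
   Context: Let $(X,d)$ be a separable compact metric space and $\mu$ a positive Radon measure on $X$; $\mathrm{supp}(\mu)$ is the smallest closed set $F$ with $\mu(X\setminus F)=0$. Let $\mathcal A(X)$ be a subalgebra of $C(X)$ containing $1$ and let $N\ge1$, $D:\mathcal A(X)\to L^\infty_\mu(X;\mathbb R^N)$ a linear operator. Let $m\ge1$, $\mathcal A(X;\mathbb R^m)=\mathcal A(X)^m$, $\mathbb M^{m\times N}$ the real $m\times N$ matrices with Euclidean inner product, $\nabla u$ the matrix with rows $Du_1,\dots,Du_m$. Let $\mathcal A^m_0=\{v\in\mathcal A(X;\mathbb R^m):v=0\text{ on }\mathrm{supp}(\mu)\}$, $\mathcal H^m_0=\{w\in L^\infty_\mu(X;\mathbb M^{m\times N}):w=\nabla v\ \mu\text{-a.e. for some }v\in\mathcal A^m_0\}$; for $\mu$-a.e. $x$, $N^m_\mu(x)=\{w(x):w\in\mathcal H^m_0\}$ (a linear subspace), $T^m_\mu(x)$ its orthogonal complement, $P^m_\mu(x)$ the orthogonal projection onto $T^m_\mu(x)$, and $\nabla_\mu u(x)=P^m_\mu(x)(\nabla u(x))$. *)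

theory Defs
  imports "HOL-Analysis.Analysis" "HOL-Probability.Probability"
begin

text \<open>The space X is the whole type 'a (a compact metric space).  Support of a Borel measure:
  the intersection of all closed sets whose complement is null (= the smallest such closed set).\<close>
definition msupp :: "'a::metric_space measure \<Rightarrow> 'a set" where
  "msupp \<mu> = \<Inter>{F. closed F \<and> emeasure \<mu> (UNIV - F) = 0}"

definition cont_subalgebra :: "('a::metric_space \<Rightarrow> real) set \<Rightarrow> bool" where
  "cont_subalgebra A \<longleftrightarrow>
     (\<forall>f\<in>A. continuous_on UNIV f) \<and> (\<lambda>x. 1) \<in> A \<and>
     (\<forall>f\<in>A. \<forall>g\<in>A. (\<lambda>x. f x + g x) \<in> A \<and> (\<lambda>x. f x * g x) \<in> A) \<and>
     (\<forall>f\<in>A. \<forall>c::real. (\<lambda>x. c * f x) \<in> A)"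

text \<open>D : A(X) \<rightarrow> L^\<infinity>_\<mu>(X;R^N), linear (as a map into L^\<infinity>, i.e. up to \<mu>-null sets).
  D u is a chosen representative of the class.\<close>
definition Linfty_linear_op ::
  "'a::metric_space measure \<Rightarrow> ('a \<Rightarrow> real) set \<Rightarrow> (('a \<Rightarrow> real) \<Rightarrow> 'a \<Rightarrow> real^'n) \<Rightarrow> bool" where
  "Linfty_linear_op \<mu> A D \<longleftrightarrow>
     (\<forall>u\<in>A. D u \<in> borel_measurable \<mu> \<and> (\<exists>C. AE x in \<mu>. norm (D u x) \<le> C)) \<and>
     (\<forall>u\<in>A. \<forall>v\<in>A. \<forall>a b::real.
        AE x in \<mu>. D (\<lambda>y. a * u y + b * v y) x = a *\<^sub>R D u x + b *\<^sub>R D v x)"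

definition vec_alg :: "('a \<Rightarrow> real) set \<Rightarrow> ('a \<Rightarrow> real^'m) set" where
  "vec_alg A = {u. \<forall>i. (\<lambda>x. u x $ i) \<in> A}"

definition grad :: "(('a \<Rightarrow> real) \<Rightarrow> 'a \<Rightarrow> real^'n) \<Rightarrow> ('a \<Rightarrow> real^'m) \<Rightarrow> 'a \<Rightarrow> real^'n^'m" where
  "grad D u x = (\<chi> i. D (\<lambda>y. u y $ i) x)"

definition vanish_alg :: "'a::metric_space measure \<Rightarrow> ('a \<Rightarrow> real) set \<Rightarrow> ('a \<Rightarrow> real^'m) set" where
  "vanish_alg \<mu> A = {v \<in> vec_alg A. \<forall>x\<in>msupp \<mu>. v x = 0}"

definition normal_space ::
  "'a::metric_space measure \<Rightarrow> ('a \<Rightarrow> real) set \<Rightarrow> (('a \<Rightarrow> real) \<Rightarrow> 'a \<Rightarrow> real^'n) \<Rightarrow> 'a \<Rightarrow> (real^'n^'m) set" where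
  "normal_space \<mu> A D x = {grad D v x | v. v \<in> vanish_alg \<mu> A}"

definition tangent_space ::
  "'a::metric_space measure \<Rightarrow> ('a \<Rightarrow> real) set \<Rightarrow> (('a \<Rightarrow> real) \<Rightarrow> 'a \<Rightarrow> real^'n) \<Rightarrow> 'a \<Rightarrow> (real^'n^'m) set" where
  "tangent_space \<mu> A D x = {w. \<forall>z\<in>normal_space \<mu> A D x. z \<bullet> w = 0}"

definition orth_proj :: "'b::real_inner set \<Rightarrow> 'b \<Rightarrow> 'b" where
  "orth_proj S w = (THE p. p \<in> S \<and> (\<forall>y\<in>S. (w - p) \<bullet> y = 0))"

definition grad_mu ::
  "'a::metric_space measure \<Rightarrow> ('a \<Rightarrow> real) set \<Rightarrow> (('a \<Rightarrow> real) \<Rightarrow> 'a \<Rightarrow> real^'n) \<Rightarrow> ('a \<Rightarrow> real^'m) \<Rightarrow> 'a \<Rightarrow> real^'n^'m" where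
  "grad_mu \<mu> A D u x = orth_proj (tangent_space \<mu> A D x) (grad D u x)"

end

theory Submission
  imports Defs
begin

text \<open>The difference w = v - u lies in A(X;R^m) and vanishes on supp \<mu>, so by linearity of D
  we have \<nabla>v = \<nabla>u + \<nabla>w \<mu>-a.e., where \<nabla>w(x) belongs to N(x) and is therefore orthogonal to
  T(x). Adding a vector orthogonal to a subspace does not change the orthogonal projection onto
  it.\<close>

lemma orth_proj_eqI:
  assumes "subspace S" and "p \<in> S" and "\<forall>y\<in>S. (w - p) \<bullet> y = 0"
  shows "orth_proj S w = p"
  unfolding orth_proj_def
proof (rule the_equality)
  show "p \<in> S \<and> (\<forall>y\<in>S. (w - p) \<bullet> y = 0)" using assms by blast
next
  fix q assume q: "q \<in> S \<and> (\<forall>y\<in>S. (w - q) \<bullet> y = 0)"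
  have "q - p \<in> S" using q assms by (simp add: subspace_diff)
  then have "(w - p) \<bullet> (q - p) - (w - q) \<bullet> (q - p) = 0" using q assms by auto
  then have "(q - p) \<bullet> (q - p) = 0" by (simp add: algebra_simps)
  then show "q = p" by simp
qed

lemma orth_proj_add_orthogonal:
  fixes S :: "'b::euclidean_space set"
  assumes S: "subspace S" and n: "\<forall>y\<in>S. n \<bullet> y = 0"
  shows "orth_proj S (g + n) = orth_proj S g"
proof -
  obtain p z where p: "p \<in> span S" and z: "\<forall>w\<in>span S. orthogonal z w" and g: "g = p + z"
    using orthogonal_subspace_decomp_exists[of S g] by metis
  have "p \<in> S" using p S span_eq_iff by blast
  moreover have "\<forall>y\<in>S. (g - p) \<bullet> y = 0"
    using z g by (auto simp: orthogonal_def span_base)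
  ultimately have "orth_proj S g = p" and "orth_proj S (g + n) = p"
    using S n by (auto intro!: orth_proj_eqI simp: inner_add_left inner_diff_left)
  then show ?thesis by simp
qed

lemma subspace_tangent_space: "subspace (tangent_space \<mu> A D x)"
  unfolding subspace_def tangent_space_def
  by (auto simp: inner_add_right inner_scaleR_right)

lemma grad_vanish_alg_orthogonal_tangent_space:
  assumes "w \<in> vanish_alg \<mu> A"
  shows "\<forall>y\<in>tangent_space \<mu> A D x. grad D w x \<bullet> y = 0"
  using assms by (auto simp: tangent_space_def normal_space_def)

lemma vec_alg_diff:
  assumes "cont_subalgebra A" and "u \<in> vec_alg A" and "v \<in> vec_alg A"
  shows "(\<lambda>x. v x - u x) \<in> vec_alg A"
proof -
  have "(\<lambda>x. v x $ i + (-1) * u x $ i) \<in> A" for i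
  proof -
    have vi: "(\<lambda>x. v x $ i) \<in> A" and ui: "(\<lambda>x. u x $ i) \<in> A"
      using assms(2,3) by (auto simp: vec_alg_def)
    have add: "\<forall>f\<in>A. \<forall>g\<in>A. (\<lambda>x. f x + g x) \<in> A"
      and scale: "\<forall>f\<in>A. \<forall>c::real. (\<lambda>x. c * f x) \<in> A"
      using assms(1) unfolding cont_subalgebra_def by blast+
    have "(\<lambda>x. (-1) * u x $ i) \<in> A" using bspec[OF scale ui] by blast
    from bspec[OF bspec[OF add vi] this] show ?thesis by simp
  qed
  then show ?thesis by (simp add: vec_alg_def)
qed

lemma grad_add_AE:
  assumes "Linfty_linear_op \<mu> A D" and "u \<in> vec_alg A" and "w \<in> vec_alg A"
  shows "AE x in \<mu>. grad D (\<lambda>y. u y + w y) x = grad D u x + grad D w x"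
proof -
  have "AE x in \<mu>. \<forall>i\<in>UNIV. D (\<lambda>y. 1 * u y $ i + 1 * w y $ i) x = 1 *\<^sub>R D (\<lambda>y. u y $ i) x + 1 *\<^sub>R D (\<lambda>y. w y $ i) x"
  proof (rule AE_finite_allI, simp)
    fix i
    have "(\<lambda>y. u y $ i) \<in> A" and "(\<lambda>y. w y $ i) \<in> A"
      using assms(2,3) by (auto simp: vec_alg_def)
    then show "AE x in \<mu>. D (\<lambda>y. 1 * u y $ i + 1 * w y $ i) x = 1 *\<^sub>R D (\<lambda>y. u y $ i) x + 1 *\<^sub>R D (\<lambda>y. w y $ i) x"
      using assms(1) unfolding Linfty_linear_op_def by fast
  qed
  then show ?thesis
    by eventually_elim (simp add: grad_def vec_eq_iff)
qed

lemma grad_mu_add_vanish_alg_AE: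
  assumes "Linfty_linear_op \<mu> A D" and "u \<in> vec_alg A" and "w \<in> vanish_alg \<mu> A"
  shows "AE x in \<mu>. grad_mu \<mu> A D (\<lambda>y. u y + w y) x = grad_mu \<mu> A D u x"
proof -
  have "w \<in> vec_alg A" using assms(3) by (simp add: vanish_alg_def)
  with assms(1,2) show ?thesis
  proof (rule grad_add_AE[THEN AE_mp], intro AE_I2 impI)
    fix x assume "grad D (\<lambda>y. u y + w y) x = grad D u x + grad D w x"
    then show "grad_mu \<mu> A D (\<lambda>y. u y + w y) x = grad_mu \<mu> A D u x"
      unfolding grad_mu_def
      using orth_proj_add_orthogonal[OF subspace_tangent_space
          grad_vanish_alg_orthogonal_tangent_space[OF assms(3)]] by simp
  qed
qed

theorem mainTheorem6:
  fixes \<mu> :: "'a::metric_space measure"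
    and A :: "('a \<Rightarrow> real) set"
    and D :: "('a \<Rightarrow> real) \<Rightarrow> 'a \<Rightarrow> real^'n"
    and u v :: "'a \<Rightarrow> real^'m"
  assumes "compact (UNIV :: 'a set)"
    and "sets \<mu> = sets borel"
    and "finite_measure \<mu>"
    and "cont_subalgebra A"
    and "Linfty_linear_op \<mu> A D"
    and "u \<in> vec_alg A"
    and "v \<in> vec_alg A"
    and "\<forall>x\<in>msupp \<mu>. v x = u x"
  shows "AE x in \<mu>. grad_mu \<mu> A D u x = grad_mu \<mu> A D v x"
proof -
  define w where "w = (\<lambda>x. v x - u x)"
  have "w \<in> vanish_alg \<mu> A"
    using vec_alg_diff[OF assms(4,6,7)] assms(8) by (simp add: vanish_alg_def w_def)
  then have "AE x in \<mu>. grad_mu \<mu> A D (\<lambda>y. u y + w y) x = grad_mu \<mu> A D u x"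
    by (rule grad_mu_add_vanish_alg_AE[OF assms(5,6)])
  moreover have "(\<lambda>y. u y + w y) = v" by (simp add: w_def)
  ultimately show ?thesis by (simp add: eq_commute)
qed

end
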